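(* Fix $t>0$ and $D\ge1$. The following are equivalent: (a) for all finite $X,Y,Z\subset\mathbb{R}^D$, $d^t_{Mag}(X,Y)+d^t_{Mag}(Y,Z)\ge d^t_{Mag}(X,Z)$; (b) magnitude at scale $t$ is submodular on finite subsets of $\mathbb{R}^D$, i.e. $\mathrm{Mag}(tA)+\mathrm{Mag}(tB)\ge\mathrm{Mag}(t(A\cup B))+\mathrm{Mag}(t(A\cap B))$ for all finite $A,B\subset\mathbb{R}^D$. Moreover, the magnitude distance does not satisfy the triangle inequality in general: there exist $D$, $t>0$ and finite $X,Y,Z\subset\mathbb{R}^D$ with $d^t_{Mag}(X,Y)+d^t_{Mag}(Y,Z)<d^t_{Mag}(X,Z)$.
   Context: For a finite set $A\subset\mathbb{R}^D$ and $t>0$, the matrix $\zeta_{tA}(x,y)=\exp(-t\|x-y\|)$ ($x,y\in A$) is invertible and $\mathrm{Mag}(tA)=\mathbb{1}^\top\zeta_{tA}^{-1}\mathbb{1}$, with $\mathrm{Mag}(t\emptyset)=0$. The magnitude distance is $d^t_{Mag}(X,Y)=2\,\mathrm{Mag}(t(X\cup Y))-\mathrm{Mag}(tX)-\mathrm{Mag}(tY)$. *)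

theory Defs
  imports "HOL-Analysis.Analysis" "Jordan_Normal_Form.Gauss_Jordan_Elimination"
begin

text \<open>Points of R^D are represented as real lists of length D (so that the
dimension D can be quantified inside a single statement).\<close>

definition pts :: "nat \<Rightarrow> real list set \<Rightarrow> bool" where
  "pts D A \<longleftrightarrow> finite A \<and> (\<forall>x\<in>A. length x = D)"

definition ldist :: "real list \<Rightarrow> real list \<Rightarrow> real" where
  "ldist x y = sqrt (\<Sum>i<length x. (x ! i - y ! i)^2)"

text \<open>An enumeration of a finite set (the result below does not depend on it).\<close>
definition enum_set :: "real list set \<Rightarrow> real list list" where
  "enum_set A = (SOME xs. distinct xs \<and> set xs = A)"

definition zeta_mat :: "real \<Rightarrow> real list set \<Rightarrow> real mat" where
  "zeta_mat t A = (let xs = enum_set A; n = length xs in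
     mat n n (\<lambda>(i,j). exp (- t * ldist (xs ! i) (xs ! j))))"

definition Mag :: "real \<Rightarrow> real list set \<Rightarrow> real" where
  "Mag t A = (if A = {} then 0 else
     (let Z = zeta_mat t A; W = the (mat_inverse Z) in
       \<Sum>i<dim_row Z. \<Sum>j<dim_col Z. W $$ (i,j)))"

definition dMag :: "real \<Rightarrow> real list set \<Rightarrow> real list set \<Rightarrow> real" where
  "dMag t X Y = 2 * Mag t (X \<union> Y) - Mag t X - Mag t Y"

end

theory Submission
  imports Defs "Jordan_Normal_Form.Determinant"
begin

(* (a) implies (b): for X = A, Y = A \<inter> B, Z = B the triangle defect
   dMag X Y + dMag Y Z - dMag X Z is twice the submodularity defect of A and B.

   (b) implies (a) in dimension one: there the kernel exp (-t |x - y|) is positive definite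
   (eliminate the points from left to right, one Cholesky step each), so every finite set has a
   weighting, Mag is its total weight, and Leinster's quadratic-form argument makes Mag monotone.
   Submodularity for X \<union> Y and Y \<union> Z together with monotonicity is the triangle inequality.

   In dimension at least two both (a) and (b) fail: for two equilateral triangles pqr and prs of
   side ln 2 / t, Mag {p,q,r} + Mag {p,r,s} = 3 < (4y + 2) / (1 + 3y) + 4/3
   = Mag {p,q,r,s} + Mag {p,r}, where y = 2 powr - sqrt 3 < 1/3. *)

definition qform :: "('a \<Rightarrow> 'a \<Rightarrow> real) \<Rightarrow> 'a set \<Rightarrow> ('a \<Rightarrow> real) \<Rightarrow> real" where
  "qform k A v = (\<Sum>a\<in>A. v a * (\<Sum>b\<in>A. k a b * v b))"

definition pos_def_on :: "('a \<Rightarrow> 'a \<Rightarrow> real) \<Rightarrow> 'a set \<Rightarrow> bool" where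
  "pos_def_on k A \<longleftrightarrow> (\<forall>v. 0 \<le> qform k A v \<and> (qform k A v = 0 \<longrightarrow> (\<forall>a\<in>A. v a = 0)))"

definition nondegenerate_on :: "('a \<Rightarrow> 'a \<Rightarrow> real) \<Rightarrow> 'a set \<Rightarrow> bool" where
  "nondegenerate_on k A \<longleftrightarrow> (\<forall>v. (\<forall>a\<in>A. (\<Sum>b\<in>A. k a b * v b) = 0) \<longrightarrow> (\<forall>a\<in>A. v a = 0))"

definition is_weighting :: "('a \<Rightarrow> 'a \<Rightarrow> real) \<Rightarrow> 'a set \<Rightarrow> ('a \<Rightarrow> real) \<Rightarrow> bool" where
  "is_weighting k A w \<longleftrightarrow> (\<forall>a\<in>A. (\<Sum>b\<in>A. k a b * w b) = 1)"

lemma pos_def_on_imp_nondegenerate_on: "pos_def_on k A \<Longrightarrow> nondegenerate_on k A"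
  unfolding pos_def_on_def nondegenerate_on_def qform_def by simp

lemma sum_extend_zero:
  assumes "finite B" "A \<subseteq> B"
  shows "(\<Sum>b\<in>B. if b \<in> A then f b else 0) = sum f A"
  using assms by (intro sum.mono_neutral_cong_right) auto

lemma qform_extend_zero:
  assumes "finite B" "A \<subseteq> B"
  shows "qform k B (\<lambda>x. if x \<in> A then v x else 0) = qform k A v"
  unfolding qform_def using assms
  by (simp add: if_distrib[of "\<lambda>x. k _ _ * x"] if_distrib[of "\<lambda>x. x * _"] sum_extend_zero cong: if_cong)

lemma pos_def_on_subset:
  assumes "finite B" "A \<subseteq> B" "pos_def_on k B"
  shows "pos_def_on k A"
  unfolding pos_def_on_def
proof
  fix v
  have "0 \<le> qform k A v \<and> (qform k A v = 0 \<longrightarrow> (\<forall>a\<in>B. (if a \<in> A then v a else 0) = 0))"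
    using assms(3) unfolding pos_def_on_def qform_extend_zero[OF assms(1,2), symmetric] by blast
  then show "0 \<le> qform k A v \<and> (qform k A v = 0 \<longrightarrow> (\<forall>a\<in>A. v a = 0))"
    using assms(2) by (metis subsetD)
qed

(* The form of wB - wA, with wA extended by zero, equals sum wB B - sum wA A. *)
lemma sum_weighting_mono:
  assumes fin: "finite B" and sub: "A \<subseteq> B"
    and sym: "\<And>a b. a \<in> B \<Longrightarrow> b \<in> B \<Longrightarrow> k a b = k b a"
    and psd: "\<And>v. 0 \<le> qform k B v"
    and wA: "is_weighting k A wA" and wB: "is_weighting k B wB"
  shows "sum wA A \<le> sum wB B"
proof -
  define v where "v x = (if x \<in> A then wA x else 0)" for x
  define c where "c a = (\<Sum>b\<in>B. k a b * v b)" for a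
  have c_A: "c a = 1" if "a \<in> A" for a
    using wA that sum_extend_zero[OF fin sub, of "\<lambda>b. k a b * wA b"]
    unfolding c_def v_def is_weighting_def by (simp add: if_distrib[of "\<lambda>x. k _ _ * x"] cong: if_cong)
  have wB_B: "(\<Sum>b\<in>B. k a b * wB b) = 1" if "a \<in> B" for a
    using wB that unfolding is_weighting_def by blast
  have sum_v: "sum v B = sum wA A"
    unfolding v_def by (rule sum_extend_zero[OF fin sub])
  have vc: "(\<Sum>a\<in>B. v a * c a) = sum wA A"
    unfolding v_def using c_A by (simp add: if_distrib[of "\<lambda>x. x * _"] sum_extend_zero[OF fin sub] cong: if_cong)
  have wBc: "(\<Sum>a\<in>B. wB a * c a) = sum wA A"
  proof -
    have "(\<Sum>a\<in>B. wB a * c a) = (\<Sum>b\<in>B. v b * (\<Sum>a\<in>B. k b a * wB a))"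
      unfolding c_def sum_distrib_left
      by (subst sum.swap) (auto intro!: sum.cong simp: sym mult_ac)
    also have "\<dots> = sum wA A"
      using wB_B sum_v by simp
    finally show ?thesis .
  qed
  have "qform k B (\<lambda>x. wB x - v x) = (\<Sum>a\<in>B. (wB a - v a) * (1 - c a))"
    unfolding qform_def c_def using wB_B
    by (simp add: algebra_simps sum_subtractf)
  also have "\<dots> = sum wB B - sum v B - (\<Sum>a\<in>B. wB a * c a) + (\<Sum>a\<in>B. v a * c a)"
    by (simp add: left_diff_distrib right_diff_distrib sum_subtractf sum.distrib)
  also have "\<dots> = sum wB B - sum wA A"
    using sum_v vc wBc by simp
  finally show ?thesis using psd[of "\<lambda>x. wB x - v x"] by simp
qed

definition zeta_kernel :: "real \<Rightarrow> real list \<Rightarrow> real list \<Rightarrow> real" where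
  "zeta_kernel t a b = exp (- t * ldist a b)"

definition vec_of_fun :: "real list set \<Rightarrow> (real list \<Rightarrow> real) \<Rightarrow> real vec" where
  "vec_of_fun A f = vec (card A) (\<lambda>i. f (enum_set A ! i))"

lemma enum_set:
  assumes "finite A"
  shows "distinct (enum_set A)" "set (enum_set A) = A"
proof -
  have "distinct (enum_set A) \<and> set (enum_set A) = A"
    unfolding enum_set_def by (rule someI_ex) (use finite_distinct_list[OF assms] in auto)
  then show "distinct (enum_set A)" "set (enum_set A) = A" by auto
qed

lemma length_enum_set: "finite A \<Longrightarrow> length (enum_set A) = card A"
  by (metis distinct_card enum_set)

lemma bij_betw_enum_set: "finite A \<Longrightarrow> bij_betw ((!) (enum_set A)) {..<card A} A"
  by (rule bij_betw_nth) (simp_all add: enum_set length_enum_set)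

lemma zeta_mat_eq:
  "finite A \<Longrightarrow> zeta_mat t A = mat (card A) (card A) (\<lambda>(i, j). zeta_kernel t (enum_set A ! i) (enum_set A ! j))"
  unfolding zeta_mat_def zeta_kernel_def by (simp add: length_enum_set Let_def)

lemma zeta_mat_carrier: "finite A \<Longrightarrow> zeta_mat t A \<in> carrier_mat (card A) (card A)"
  by (simp add: zeta_mat_eq)

lemma sum_vec_of_fun: "finite A \<Longrightarrow> (\<Sum>i<card A. vec_of_fun A f $ i) = sum f A"
  unfolding vec_of_fun_def by (simp add: sum.reindex_bij_betw[OF bij_betw_enum_set])

lemma ball_enum_set:
  assumes "finite A"
  shows "(\<forall>i<card A. P (enum_set A ! i)) \<longleftrightarrow> (\<forall>a\<in>A. P a)"
proof -
  have "A = (!) (enum_set A) ` {..<card A}"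
    using bij_betw_imp_surj_on[OF bij_betw_enum_set[OF assms]] by simp
  then have "(\<forall>a\<in>A. P a) \<longleftrightarrow> (\<forall>a\<in>(!) (enum_set A) ` {..<card A}. P a)"
    by simp
  then show ?thesis by auto
qed

lemma dim_vec_of_fun [simp]: "dim_vec (vec_of_fun A f) = card A"
  by (simp add: vec_of_fun_def)

lemma index_vec_of_fun [simp]: "i < card A \<Longrightarrow> vec_of_fun A f $ i = f (enum_set A ! i)"
  by (simp add: vec_of_fun_def)

lemma vec_of_fun_eq_iff: "finite A \<Longrightarrow> vec_of_fun A f = vec_of_fun A g \<longleftrightarrow> (\<forall>a\<in>A. f a = g a)"
  by (simp add: vec_eq_iff flip: ball_enum_set)

lemma vec_of_fun_surj:
  assumes "finite A" "v \<in> carrier_vec (card A)"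
  shows "\<exists>f. v = vec_of_fun A f"
proof
  have inj: "inj_on ((!) (enum_set A)) {..<card A}"
    using bij_betw_enum_set[OF assms(1)] by (rule bij_betw_imp_inj_on)
  show "v = vec_of_fun A (\<lambda>b. v $ inv_into {..<card A} ((!) (enum_set A)) b)"
    using assms(2) unfolding vec_of_fun_def by (auto simp: inv_into_f_f[OF inj])
qed

lemma zeta_mat_mult_vec_of_fun:
  assumes "finite A" "i < card A"
  shows "(zeta_mat t A *\<^sub>v vec_of_fun A f) $ i = (\<Sum>b\<in>A. zeta_kernel t (enum_set A ! i) b * f b)"
  using assms
  by (simp add: zeta_mat_eq vec_of_fun_def scalar_prod_def atLeast0LessThan
      sum.reindex_bij_betw[OF bij_betw_enum_set, of A "\<lambda>b. zeta_kernel t (enum_set A ! i) b * f b"])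

lemma zeta_mat_mult_eq_iff:
  assumes "finite A"
  shows "zeta_mat t A *\<^sub>v vec_of_fun A f = vec_of_fun A g
    \<longleftrightarrow> (\<forall>a\<in>A. (\<Sum>b\<in>A. zeta_kernel t a b * f b) = g a)"
  using zeta_mat_carrier[OF assms, of t]
  by (simp add: vec_eq_iff zeta_mat_mult_vec_of_fun[OF assms] del: index_mult_mat_vec
      flip: ball_enum_set[OF assms])

lemma det_zeta_mat_nonzero:
  assumes fin: "finite A" and nd: "nondegenerate_on (zeta_kernel t) A"
  shows "det (zeta_mat t A) \<noteq> 0"
proof
  assume "det (zeta_mat t A) = 0"
  then obtain v where v: "v \<in> carrier_vec (card A)" "v \<noteq> 0\<^sub>v (card A)" "zeta_mat t A *\<^sub>v v = 0\<^sub>v (card A)"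
    using det_0_iff_vec_prod_zero[OF zeta_mat_carrier[OF fin]] by auto
  obtain f where f: "v = vec_of_fun A f"
    using vec_of_fun_surj[OF fin v(1)] by blast
  have zero: "0\<^sub>v (card A) = vec_of_fun A (\<lambda>_. 0)"
    by (simp add: vec_of_fun_def zero_vec_def)
  have "\<forall>a\<in>A. f a = 0"
    using nd v(3) unfolding f zero zeta_mat_mult_eq_iff[OF fin] nondegenerate_on_def by simp
  then show False
    using v(2) unfolding f zero vec_of_fun_eq_iff[OF fin] by simp
qed

lemma is_weighting_zeta_iff:
  "finite A \<Longrightarrow> is_weighting (zeta_kernel t) A w
    \<longleftrightarrow> zeta_mat t A *\<^sub>v vec_of_fun A w = vec_of_fun A (\<lambda>_. 1)"
  by (simp add: zeta_mat_mult_eq_iff is_weighting_def)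

lemma zeta_mat_inverse:
  assumes fin: "finite A" and nd: "nondegenerate_on (zeta_kernel t) A"
  obtains W where "mat_inverse (zeta_mat t A) = Some W" "W \<in> carrier_mat (card A) (card A)"
    "zeta_mat t A * W = 1\<^sub>m (card A)" "W * zeta_mat t A = 1\<^sub>m (card A)"
proof -
  note Z = zeta_mat_carrier[OF fin, of t]
  have "zeta_mat t A \<in> Units (ring_mat TYPE(real) (card A) ())"
    using det_non_zero_imp_unit[OF Z det_zeta_mat_nonzero[OF fin nd]] .
  then obtain W where "mat_inverse (zeta_mat t A) = Some W"
    using mat_inverse(1)[OF Z] by fastforce
  with mat_inverse(2)[OF Z this] that show thesis by blast
qed

lemma Mag_eq_sum_inverse_mult_ones:
  assumes fin: "finite A" and W: "mat_inverse (zeta_mat t A) = Some W" "W \<in> carrier_mat (card A) (card A)"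
  shows "Mag t A = (\<Sum>i<card A. (W *\<^sub>v vec_of_fun A (\<lambda>_. 1)) $ i)"
proof (cases "A = {}")
  case False
  then show ?thesis
    using W zeta_mat_carrier[OF fin, of t] unfolding Mag_def
    by (auto simp: Let_def scalar_prod_def atLeast0LessThan intro!: sum.cong)
qed (simp add: Mag_def)

lemma Mag_eq_sum_weighting:
  assumes fin: "finite A" and nd: "nondegenerate_on (zeta_kernel t) A"
    and w: "is_weighting (zeta_kernel t) A w"
  shows "Mag t A = sum w A"
proof -
  obtain W where W: "mat_inverse (zeta_mat t A) = Some W" "W \<in> carrier_mat (card A) (card A)"
    and WZ: "W * zeta_mat t A = 1\<^sub>m (card A)"
    using zeta_mat_inverse[OF fin nd] .
  have "W *\<^sub>v vec_of_fun A (\<lambda>_. 1) = (W * zeta_mat t A) *\<^sub>v vec_of_fun A w"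
    using w W(2) zeta_mat_carrier[OF fin, of t] unfolding is_weighting_zeta_iff[OF fin]
    by (metis assoc_mult_mat_vec carrier_vecI dim_vec_of_fun)
  also have "\<dots> = vec_of_fun A w"
    using WZ by (metis carrier_vecI dim_vec_of_fun one_mult_mat_vec)
  finally show ?thesis
    using Mag_eq_sum_inverse_mult_ones[OF fin W] sum_vec_of_fun[OF fin] by simp
qed

lemma weighting_exists:
  assumes fin: "finite A" and nd: "nondegenerate_on (zeta_kernel t) A"
  shows "\<exists>w. is_weighting (zeta_kernel t) A w"
proof -
  obtain W where W: "W \<in> carrier_mat (card A) (card A)" and ZW: "zeta_mat t A * W = 1\<^sub>m (card A)"
    using zeta_mat_inverse[OF fin nd] .
  define u where "u = W *\<^sub>v vec_of_fun A (\<lambda>_. 1)"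
  obtain w where w: "u = vec_of_fun A w"
    using vec_of_fun_surj[OF fin] W unfolding u_def by (metis mult_mat_vec_carrier carrier_vecI dim_vec_of_fun)
  have "zeta_mat t A *\<^sub>v u = vec_of_fun A (\<lambda>_. 1)"
    using ZW W zeta_mat_carrier[OF fin, of t] unfolding u_def
    by (metis assoc_mult_mat_vec carrier_vecI dim_vec_of_fun one_mult_mat_vec)
  then show ?thesis
    using w is_weighting_zeta_iff[OF fin] by auto
qed

lemma zeta_kernel_commute: "length a = length b \<Longrightarrow> zeta_kernel t a b = zeta_kernel t b a"
  unfolding zeta_kernel_def ldist_def by (simp add: power2_commute)

lemma Mag_mono:
  assumes B: "pts D B" and sub: "A \<subseteq> B" and pd: "pos_def_on (zeta_kernel t) B"
  shows "Mag t A \<le> Mag t B"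
proof -
  have finB: "finite B" and finA: "finite A"
    using B sub finite_subset unfolding pts_def by auto
  have ndA: "nondegenerate_on (zeta_kernel t) A" and ndB: "nondegenerate_on (zeta_kernel t) B"
    using pd pos_def_on_subset[OF finB sub pd] by (simp_all add: pos_def_on_imp_nondegenerate_on)
  obtain wA wB where wA: "is_weighting (zeta_kernel t) A wA" and wB: "is_weighting (zeta_kernel t) B wB"
    using weighting_exists[OF finA ndA] weighting_exists[OF finB ndB] by blast
  have "sum wA A \<le> sum wB B"
    using B pd unfolding pts_def pos_def_on_def
    by (intro sum_weighting_mono[OF finB sub _ _ wA wB]) (auto intro: zeta_kernel_commute)
  then show ?thesis
    using Mag_eq_sum_weighting[OF finA ndA wA] Mag_eq_sum_weighting[OF finB ndB wB] by simp
qed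

lemma qform_insert:
  fixes k :: "'a \<Rightarrow> 'a \<Rightarrow> real"
  assumes fin: "finite A" and b: "b \<notin> A" and sym: "\<And>a. a \<in> A \<Longrightarrow> k a b = k b a"
  shows "qform k (insert b A) f = k b b * (f b)\<^sup>2 + 2 * f b * (\<Sum>y\<in>A. k b y * f y) + qform k A f"
proof -
  have col: "(\<Sum>a\<in>A. f a * k a b) = (\<Sum>y\<in>A. k b y * f y)"
    using sym by (auto intro: sum.cong simp: mult.commute)
  have "qform k (insert b A) f
      = f b * (k b b * f b + (\<Sum>y\<in>A. k b y * f y)) + (\<Sum>a\<in>A. f a * (k a b * f b + (\<Sum>y\<in>A. k a y * f y)))"
    using fin b by (simp add: qform_def)
  also have "\<dots> = f b * (k b b * f b + (\<Sum>y\<in>A. k b y * f y)) + f b * (\<Sum>a\<in>A. f a * k a b) + qform k A f"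
    by (simp add: qform_def distrib_left sum.distrib sum_distrib_left mult_ac)
  finally show ?thesis
    unfolding col by (simp add: power2_eq_square algebra_simps)
qed

definition laplace_kernel :: "real \<Rightarrow> real \<Rightarrow> real \<Rightarrow> real" where
  "laplace_kernel t x y = exp (- t * \<bar>x - y\<bar>)"

lemma laplace_kernel_commute: "laplace_kernel t x y = laplace_kernel t y x"
  by (simp add: laplace_kernel_def abs_minus_commute)

lemma laplace_kernel_mult:
  assumes "x \<le> y" "y \<le> z"
  shows "laplace_kernel t x z = laplace_kernel t x y * laplace_kernel t y z"
proof -
  have "\<bar>x - z\<bar> = \<bar>x - y\<bar> + \<bar>y - z\<bar>"
    using assms by (smt (verit))
  then show ?thesis
    by (simp add: laplace_kernel_def ring_distribs flip: exp_add)
qed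

lemma sum_laplace_kernel_shift:
  assumes xb: "x \<le> b" and bA: "\<forall>y\<in>A. b \<le> y"
  shows "(\<Sum>y\<in>A. laplace_kernel t x y * f y) = laplace_kernel t x b * (\<Sum>y\<in>A. laplace_kernel t b y * f y)"
  unfolding sum_distrib_left
proof (rule sum.cong)
  fix y assume "y \<in> A"
  then show "laplace_kernel t x y * f y = laplace_kernel t x b * (laplace_kernel t b y * f y)"
    using laplace_kernel_mult[OF xb, of y t] bA by simp
qed simp

(* Induction on S, removing its leftmost point b: the row of x is e = exp (-t (b - x)) < 1
   times the row of b, and the form on S is (f b + R)^2 + (Q - R^2), where R is the row of b
   and Q the form on S - {b}. *)
lemma laplace_kernel_qform_ge_row:
  assumes t: "t > 0" and fin: "finite S" and below: "\<forall>y\<in>S. x < y"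
  shows "(\<Sum>y\<in>S. laplace_kernel t x y * f y)\<^sup>2 \<le> qform (laplace_kernel t) S f
    \<and> ((\<Sum>y\<in>S. laplace_kernel t x y * f y)\<^sup>2 = qform (laplace_kernel t) S f \<longrightarrow> (\<forall>y\<in>S. f y = 0))"
  using fin below
proof (induction S arbitrary: x rule: finite_linorder_min_induct)
  case empty
  then show ?case by (simp add: qform_def)
next
  case (insert b A)
  let ?K = "laplace_kernel t"
  define R where "R = (\<Sum>y\<in>A. ?K b y * f y)"
  define Q where "Q = qform ?K A f"
  define e where "e = ?K x b"
  have b: "b \<notin> A" and xb: "x < b" and bA: "\<forall>y\<in>A. b \<le> y"
    using insert by auto
  have IH: "R\<^sup>2 \<le> Q \<and> (R\<^sup>2 = Q \<longrightarrow> (\<forall>y\<in>A. f y = 0))"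
    using insert.IH[of b] insert.hyps(2) unfolding R_def Q_def by blast
  have "0 < e" "e < 1"
    using t xb by (simp_all add: e_def laplace_kernel_def)
  then have e2: "0 < 1 - e\<^sup>2"
    by (simp add: abs_square_less_1)
  have row: "(\<Sum>y\<in>insert b A. ?K x y * f y) = e * (f b + R)"
    using sum_laplace_kernel_shift[OF less_imp_le[OF xb] bA] b insert.hyps(1)
    by (simp add: e_def R_def distrib_left)
  have "?K b b = 1"
    by (simp add: laplace_kernel_def)
  then have "qform ?K (insert b A) f = (f b)\<^sup>2 + 2 * f b * R + Q"
    using qform_insert[OF insert.hyps(1) b, of ?K] by (simp add: R_def Q_def laplace_kernel_commute)
  then have split: "qform ?K (insert b A) f - (e * (f b + R))\<^sup>2 = (1 - e\<^sup>2) * (f b + R)\<^sup>2 + (Q - R\<^sup>2)"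
    by (simp add: power2_eq_square algebra_simps)
  have nonneg: "0 \<le> (1 - e\<^sup>2) * (f b + R)\<^sup>2"
    using e2 by simp
  show ?case
    unfolding row
  proof (intro conjI impI)
    show "(e * (f b + R))\<^sup>2 \<le> qform ?K (insert b A) f"
      using split nonneg IH by linarith
    assume "(e * (f b + R))\<^sup>2 = qform ?K (insert b A) f"
    then have "(1 - e\<^sup>2) * (f b + R)\<^sup>2 = 0" "Q = R\<^sup>2"
      using split nonneg IH by linarith+
    then have "f b + R = 0" "\<forall>y\<in>A. f y = 0"
      using IH e2 by auto
    then show "\<forall>y\<in>insert b A. f y = 0"
      by (simp add: R_def)
  qed
qed

lemma pos_def_on_laplace_kernel:
  assumes t: "t > 0" and fin: "finite S"
  shows "pos_def_on (laplace_kernel t) S"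
  unfolding pos_def_on_def
proof
  fix f
  show "0 \<le> qform (laplace_kernel t) S f \<and> (qform (laplace_kernel t) S f = 0 \<longrightarrow> (\<forall>y\<in>S. f y = 0))"
  proof (cases "S = {}")
    case False
    have "\<forall>y\<in>S. Min S - 1 < y"
      using Min_le[OF fin] by fastforce
    from laplace_kernel_qform_ge_row[OF t fin this, of f] show ?thesis
      by (smt (verit) zero_le_power2 power_zero_numeral)
  qed (simp add: qform_def)
qed

lemma pos_def_on_inj_image:
  assumes inj: "inj_on h S" and k: "\<And>a b. a \<in> S \<Longrightarrow> b \<in> S \<Longrightarrow> k' a b = k (h a) (h b)"
    and pd: "pos_def_on k (h ` S)"
  shows "pos_def_on k' S"
  unfolding pos_def_on_def
proof
  fix v
  define f :: "'b \<Rightarrow> real" where "f = v \<circ> inv_into S h"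
  have f_h: "f (h a) = v a" if "a \<in> S" for a
    using inj that by (simp add: f_def)
  have "qform k (h ` S) f = qform k' S v"
    unfolding qform_def by (simp add: sum.reindex[OF inj] f_h k cong: sum.cong)
  then show "0 \<le> qform k' S v \<and> (qform k' S v = 0 \<longrightarrow> (\<forall>a\<in>S. v a = 0))"
    using pd f_h unfolding pos_def_on_def by (metis image_eqI)
qed

lemma ldist_singletons: "ldist [x] [y] = \<bar>x - y\<bar>"
  by (simp add: ldist_def)

lemma pos_def_on_zeta_kernel_1d:
  assumes t: "t > 0" and B: "pts 1 B"
  shows "pos_def_on (zeta_kernel t) B"
proof -
  have len: "a = [hd a]" if "a \<in> B" for a
    using B that unfolding pts_def by (cases a) auto
  have "inj_on hd B"
    using len by (metis inj_onI)
  moreover have "zeta_kernel t a b = laplace_kernel t (hd a) (hd b)" if "a \<in> B" "b \<in> B" for a b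
    using ldist_singletons[of "hd a" "hd b"] len[OF that(1)] len[OF that(2)]
    unfolding zeta_kernel_def laplace_kernel_def by metis
  moreover have "pos_def_on (laplace_kernel t) (hd ` B)"
    using B t by (simp add: pts_def pos_def_on_laplace_kernel)
  ultimately show ?thesis
    by (rule pos_def_on_inj_image)
qed

lemma equidistant_row_sum:
  fixes k :: "'a \<Rightarrow> 'a \<Rightarrow> real"
  assumes fin: "finite A" and a: "a \<in> A"
    and k: "\<And>b. b \<in> A \<Longrightarrow> k a b = (if a = b then 1 else c)"
  shows "(\<Sum>b\<in>A. k a b * v b) = (1 - c) * v a + c * sum v A"
proof -
  have "(\<Sum>b\<in>A. k a b * v b) = (\<Sum>b\<in>A. c * v b + (if b = a then (1 - c) * v b else 0))"
    using k by (intro sum.cong) (auto simp: algebra_simps)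
  also have "\<dots> = c * sum v A + (1 - c) * v a"
    using fin a by (simp add: sum.distrib sum_distrib_left)
  finally show ?thesis by (simp add: algebra_simps)
qed

lemma equidistant_weighting:
  fixes k :: "'a \<Rightarrow> 'a \<Rightarrow> real"
  assumes fin: "finite A"
    and k: "\<And>a b. a \<in> A \<Longrightarrow> b \<in> A \<Longrightarrow> k a b = (if a = b then 1 else c)"
    and c: "c \<noteq> 1" "1 + (real (card A) - 1) * c \<noteq> 0"
  shows "nondegenerate_on k A" "is_weighting k A (\<lambda>_. 1 / (1 + (real (card A) - 1) * c))"
proof -
  have row: "(\<Sum>b\<in>A. k a b * v b) = (1 - c) * v a + c * sum v A" if "a \<in> A" for a v
    by (rule equidistant_row_sum[OF fin that]) (rule k[OF that])
  show "nondegenerate_on k A"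
    unfolding nondegenerate_on_def
  proof (intro allI impI)
    fix v assume "\<forall>a\<in>A. (\<Sum>b\<in>A. k a b * v b) = 0"
    then have v: "(1 - c) * v a = - c * sum v A" if "a \<in> A" for a
      using row that by force
    have "(1 - c) * sum v A = (\<Sum>a\<in>A. (1 - c) * v a)"
      by (simp add: sum_distrib_left)
    also have "\<dots> = (\<Sum>a\<in>A. - c * sum v A)"
      using v by (rule sum.cong[OF refl])
    also have "\<dots> = - c * card A * sum v A"
      by (simp only: sum_constant) (simp add: mult_ac)
    finally have "(1 + (real (card A) - 1) * c) * sum v A = 0"
      by (simp add: algebra_simps)
    then show "\<forall>a\<in>A. v a = 0"
      using v c by simp
  qed
  show "is_weighting k A (\<lambda>_. 1 / (1 + (real (card A) - 1) * c))"
    unfolding is_weighting_def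
  proof
    fix a assume a: "a \<in> A"
    define w where "w = 1 / (1 + (real (card A) - 1) * c)"
    have "(\<Sum>b\<in>A. k a b * w) = (1 + (real (card A) - 1) * c) * w"
      using row[OF a, of "\<lambda>_. w"] by (simp add: algebra_simps)
    then show "(\<Sum>b\<in>A. k a b * (1 / (1 + (real (card A) - 1) * c))) = 1"
      using c(2) by (simp add: w_def)
  qed
qed

context
  fixes k :: "'a \<Rightarrow> 'a \<Rightarrow> real" and p q r s :: 'a and y :: real
  assumes dist: "distinct [p, q, r, s]"
    and k: "\<And>a b. a \<in> {p, q, r, s} \<Longrightarrow> b \<in> {p, q, r, s} \<Longrightarrow>
      k a b = (if a = b then 1 else if {a, b} = {q, s} then y else 1 / 2)"
    and y: "0 \<le> y" "y < 1"
begin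

lemma rhombus_row_sums:
  "(\<Sum>b\<in>{p, q, r, s}. k p b * v b) = v p + (v q + v r + v s) / 2"
  "(\<Sum>b\<in>{p, q, r, s}. k r b * v b) = v r + (v p + v q + v s) / 2"
  "(\<Sum>b\<in>{p, q, r, s}. k q b * v b) = v q + (v p + v r) / 2 + y * v s"
  "(\<Sum>b\<in>{p, q, r, s}. k s b * v b) = v s + (v p + v r) / 2 + y * v q"
proof -
  have ne: "p \<noteq> q" "p \<noteq> r" "p \<noteq> s" "q \<noteq> r" "q \<noteq> s" "r \<noteq> s"
    using dist by auto
  then show
    "(\<Sum>b\<in>{p, q, r, s}. k p b * v b) = v p + (v q + v r + v s) / 2"
    "(\<Sum>b\<in>{p, q, r, s}. k r b * v b) = v r + (v p + v q + v s) / 2"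
    "(\<Sum>b\<in>{p, q, r, s}. k q b * v b) = v q + (v p + v r) / 2 + y * v s"
    "(\<Sum>b\<in>{p, q, r, s}. k s b * v b) = v s + (v p + v r) / 2 + y * v q"
    by (simp_all add: ne[symmetric] k doubleton_eq_iff algebra_simps)
qed

lemma rhombus_nondegenerate: "nondegenerate_on k {p, q, r, s}"
  unfolding nondegenerate_on_def
proof (intro allI impI)
  fix v assume "\<forall>a\<in>{p, q, r, s}. (\<Sum>b\<in>{p, q, r, s}. k a b * v b) = 0"
  then have eqs: "v p + (v q + v r + v s) / 2 = 0" "v r + (v p + v q + v s) / 2 = 0"
    "v q + (v p + v r) / 2 + y * v s = 0" "v s + (v p + v r) / 2 + y * v q = 0"
    by (simp_all add: rhombus_row_sums)
  have "v r - v p = 2 * (v r + (v p + v q + v s) / 2) - 2 * (v p + (v q + v r + v s) / 2)"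
    by (simp add: field_simps)
  then have pr: "v r = v p"
    using eqs by simp
  have "(1 - y) * (v q - v s) = (v q + (v p + v r) / 2 + y * v s) - (v s + (v p + v r) / 2 + y * v q)"
    by (simp add: algebra_simps)
  then have qs: "v s = v q"
    using eqs y by simp
  have "(1 + 3 * y) * v q = 3 * (v q + (v p + v r) / 2 + y * v s) - 2 * (v p + (v q + v r + v s) / 2)"
    unfolding pr qs by (simp add: algebra_simps)
  then have "v q = 0"
    using eqs y by (simp add: add_nonneg_pos)
  then show "\<forall>a\<in>{p, q, r, s}. v a = 0"
    using eqs pr qs by auto
qed

lemma rhombus_weighting:
  "is_weighting k {p, q, r, s} (\<lambda>x. if x = q \<or> x = s then 1 / (1 + 3 * y) else 2 * y / (1 + 3 * y))"
proof -
  define w where "w = 1 / (1 + 3 * y)"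
  define v where "v x = (if x = q \<or> x = s then 1 / (1 + 3 * y) else 2 * y / (1 + 3 * y))" for x
  have hw: "w + 3 * (y * w) = 1"
    using y by (simp add: w_def field_simps)
  have "v p = 2 * (y * w)" "v r = 2 * (y * w)" "v q = w" "v s = w"
    using dist by (auto simp: v_def w_def)
  then have "v p + (v q + v r + v s) / 2 = 1" "v r + (v p + v q + v s) / 2 = 1"
    "v q + (v p + v r) / 2 + y * v s = 1" "v s + (v p + v r) / 2 + y * v q = 1"
    using hw by (simp_all add: field_simps)
  then have "is_weighting k {p, q, r, s} v"
    unfolding is_weighting_def by (simp add: rhombus_row_sums)
  then show ?thesis
    by (simp add: v_def[abs_def])
qed

end

lemma Mag_equidistant:
  assumes "finite A" "\<And>a b. a \<in> A \<Longrightarrow> b \<in> A \<Longrightarrow> zeta_kernel t a b = (if a = b then 1 else c)"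
    "c \<noteq> 1" "1 + (real (card A) - 1) * c \<noteq> 0"
  shows "Mag t A = card A / (1 + (real (card A) - 1) * c)"
  using Mag_eq_sum_weighting[OF assms(1) equidistant_weighting[OF assms]] by simp

definition plane_point :: "nat \<Rightarrow> real \<Rightarrow> real \<Rightarrow> real list" where
  "plane_point D x y = x # y # replicate (D - 2) 0"

lemma ldist_plane_point:
  "ldist (plane_point D x1 y1) (plane_point D x2 y2) = sqrt ((x1 - x2)\<^sup>2 + (y1 - y2)\<^sup>2)"
  unfolding ldist_def plane_point_def by (simp add: sum.lessThan_Suc_shift del: sum.lessThan_Suc)

lemma three_lt_two_powr_sqrt3: "3 < (2::real) powr sqrt 3"
proof -
  have "8 / 5 \<le> sqrt (3::real)"
    by (rule real_le_rsqrt) (simp add: power2_eq_square)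
  then have le: "2 powr (8 / 5) \<le> (2::real) powr sqrt 3"
    by (rule powr_mono) simp
  have "(2 powr (8 / 5 :: real)) ^ 5 = (2::real) ^ 8"
    by (simp add: powr_realpow[symmetric] powr_powr)
  then have "3 ^ 5 < (2 powr (8 / 5 :: real)) ^ 5"
    by simp
  then have "3 < 2 powr (8 / 5 :: real)"
    by (rule power_less_imp_less_base) simp
  with le show ?thesis
    by linarith
qed

(* Two equilateral triangles pqr and prs of side ln 2 / t sharing the edge pr. *)
lemma rhombus_in_plane:
  assumes t: "t > 0" and D: "D \<ge> 2"
  obtains p q r s where "distinct [p, q, r, s]" "pts D {p, q, r, s}"
    "\<And>a b. a \<in> {p, q, r, s} \<Longrightarrow> b \<in> {p, q, r, s} \<Longrightarrow>
      zeta_kernel t a b = (if a = b then 1 else if {a, b} = {q, s} then 2 powr - sqrt 3 else 1 / 2)"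
proof -
  define L where "L = ln 2 / t"
  have L: "L > 0" "t * L = ln 2"
    using t by (simp_all add: L_def)
  define p where "p = plane_point D 0 0"
  define r where "r = plane_point D L 0"
  define q where "q = plane_point D (L / 2) (sqrt 3 / 2 * L)"
  define s where "s = plane_point D (L / 2) (- sqrt 3 / 2 * L)"
  have dist: "distinct [p, q, r, s]"
    using L by (simp add: p_def q_def r_def s_def plane_point_def)
  have pts: "pts D {p, q, r, s}"
    using D by (simp add: pts_def p_def q_def r_def s_def plane_point_def)
  have side: "sqrt ((L / 2)\<^sup>2 + (sqrt 3 / 2 * L)\<^sup>2) = L"
    using L by (simp add: power_mult_distrib power_divide algebra_simps)
  have lengths: "ldist p q = L" "ldist p r = L" "ldist p s = L" "ldist q r = L" "ldist r s = L"
    "ldist q s = sqrt 3 * L" "ldist q p = L" "ldist r p = L" "ldist s p = L" "ldist r q = L"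
    "ldist s r = L" "ldist s q = sqrt 3 * L" "ldist a a = 0" for a
    unfolding p_def q_def r_def s_def ldist_plane_point using L side
    by (simp_all add: power_mult_distrib power_divide real_sqrt_mult algebra_simps ldist_def)
  have half: "exp (- (t * L)) = 1 / 2" and far: "exp (- (t * (sqrt 3 * L))) = 2 powr - sqrt 3"
    using L by (simp_all add: exp_minus powr_def mult.left_commute)
  show thesis
  proof (rule that[OF dist pts])
    fix a b assume "a \<in> {p, q, r, s}" "b \<in> {p, q, r, s}"
    then show "zeta_kernel t a b = (if a = b then 1 else if {a, b} = {q, s} then 2 powr - sqrt 3 else 1 / 2)"
      using dist by (auto simp: zeta_kernel_def lengths half far doubleton_eq_iff)
  qed
qed

lemma Mag_rhombus:
  assumes dist: "distinct [p, q, r, s]"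
    and K: "\<And>a b. a \<in> {p, q, r, s} \<Longrightarrow> b \<in> {p, q, r, s} \<Longrightarrow>
      zeta_kernel t a b = (if a = b then 1 else if {a, b} = {q, s} then y else 1 / 2)"
    and y: "0 \<le> y" "y < 1"
  shows "Mag t {p, q, r} = 3 / 2" "Mag t {p, r, s} = 3 / 2" "Mag t {p, r} = 4 / 3"
    "Mag t {p, q, r, s} = (4 * y + 2) / (1 + 3 * y)"
proof -
  have ne: "p \<noteq> q" "p \<noteq> r" "p \<noteq> s" "q \<noteq> r" "q \<noteq> s" "r \<noteq> s"
    using dist by auto
  have equi: "Mag t S = card S / (1 + (real (card S) - 1) * (1 / 2))"
    if S: "S \<subseteq> {p, q, r, s}" "\<not> {q, s} \<subseteq> S" for S
  proof (rule Mag_equidistant)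
    show "finite S"
      using S(1) finite_subset by blast
    show "zeta_kernel t a b = (if a = b then 1 else 1 / 2)" if "a \<in> S" "b \<in> S" for a b
    proof -
      have "{a, b} \<subseteq> S"
        using that by simp
      then have "{a, b} \<noteq> {q, s}"
        using S(2) by metis
      moreover have "a \<in> {p, q, r, s}" "b \<in> {p, q, r, s}"
        using that S(1) by auto
      ultimately show ?thesis
        using K by simp
    qed
    show "1 + (real (card S) - 1) * (1 / 2) \<noteq> 0"
      by (simp add: field_simps)
  qed simp
  show "Mag t {p, q, r} = 3 / 2" "Mag t {p, r, s} = 3 / 2" "Mag t {p, r} = 4 / 3"
    using equi[of "{p, q, r}"] equi[of "{p, r, s}"] equi[of "{p, r}"] by (simp_all add: ne ne[symmetric])
  show "Mag t {p, q, r, s} = (4 * y + 2) / (1 + 3 * y)"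
    using y Mag_eq_sum_weighting[OF _ rhombus_nondegenerate[OF dist K y] rhombus_weighting[OF dist K y]]
    by (simp add: ne ne[symmetric] add_divide_distrib)
qed

lemma Mag_not_submodular:
  assumes t: "t > 0" and D: "D \<ge> 2"
  shows "\<exists>A B. pts D A \<and> pts D B \<and> Mag t A + Mag t B < Mag t (A \<union> B) + Mag t (A \<inter> B)"
proof -
  obtain p q r s where dist: "distinct [p, q, r, s]" and pts: "pts D {p, q, r, s}"
    and K: "\<And>a b. a \<in> {p, q, r, s} \<Longrightarrow> b \<in> {p, q, r, s} \<Longrightarrow>
      zeta_kernel t a b = (if a = b then 1 else if {a, b} = {q, s} then 2 powr - sqrt 3 else 1 / 2)"
    using rhombus_in_plane[OF t D] by blast
  define y :: real where "y = 2 powr - sqrt 3"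
  have y: "0 \<le> y" "y < 1 / 3"
    using three_lt_two_powr_sqrt3 by (simp_all add: y_def powr_minus divide_simps)
  have "y < 1"
    using y by simp
  note M = Mag_rhombus[OF dist K[folded y_def] y(1) this]
  have U: "{p, q, r} \<union> {p, r, s} = {p, q, r, s}" and I: "{p, q, r} \<inter> {p, r, s} = {p, r}"
    using dist by auto
  have "5 / 3 < (4 * y + 2) / (1 + 3 * y)"
    using y by (simp add: field_simps)
  then have "Mag t {p, q, r} + Mag t {p, r, s} < Mag t ({p, q, r} \<union> {p, r, s}) + Mag t ({p, q, r} \<inter> {p, r, s})"
    unfolding U I using M by linarith
  moreover have "pts D {p, q, r}" "pts D {p, r, s}"
    using pts by (simp_all add: pts_def)
  ultimately show ?thesis
    by blast
qed

lemma dMag_triangle_defect: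
  "dMag t A (A \<inter> B) + dMag t (A \<inter> B) B - dMag t A B
    = 2 * (Mag t A + Mag t B - Mag t (A \<union> B) - Mag t (A \<inter> B))"
proof -
  have "A \<union> (A \<inter> B) = A" "(A \<inter> B) \<union> B = B"
    by auto
  then show ?thesis
    unfolding dMag_def by simp
qed

lemma Mag_submodular_if_dMag_triangle:
  assumes tri: "\<And>X Y Z. pts D X \<Longrightarrow> pts D Y \<Longrightarrow> pts D Z \<Longrightarrow> dMag t X Z \<le> dMag t X Y + dMag t Y Z"
    and A: "pts D A" and B: "pts D B"
  shows "Mag t (A \<union> B) + Mag t (A \<inter> B) \<le> Mag t A + Mag t B"
proof -
  have "pts D (A \<inter> B)"
    using A by (auto simp: pts_def)
  then have "dMag t A B \<le> dMag t A (A \<inter> B) + dMag t (A \<inter> B) B"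
    using tri A B by blast
  then show ?thesis
    using dMag_triangle_defect[of t A B] by (simp add: algebra_simps)
qed

lemma dMag_triangle_1d:
  assumes t: "t > 0"
    and submod: "\<And>A B. pts 1 A \<Longrightarrow> pts 1 B \<Longrightarrow> Mag t (A \<union> B) + Mag t (A \<inter> B) \<le> Mag t A + Mag t B"
    and X: "pts 1 X" and Y: "pts 1 Y" and Z: "pts 1 Z"
  shows "dMag t X Z \<le> dMag t X Y + dMag t Y Z"
proof -
  have XY: "pts 1 (X \<union> Y)" and YZ: "pts 1 (Y \<union> Z)"
    using X Y Z by (auto simp: pts_def)
  then have U: "pts 1 (X \<union> Y \<union> (Y \<union> Z))" and I: "pts 1 ((X \<union> Y) \<inter> (Y \<union> Z))"
    by (auto simp: pts_def)
  have "Mag t (X \<union> Z) \<le> Mag t (X \<union> Y \<union> (Y \<union> Z))"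
    by (rule Mag_mono[OF U _ pos_def_on_zeta_kernel_1d[OF t U]]) auto
  moreover have "Mag t Y \<le> Mag t ((X \<union> Y) \<inter> (Y \<union> Z))"
    by (rule Mag_mono[OF I _ pos_def_on_zeta_kernel_1d[OF t I]]) auto
  ultimately show ?thesis
    using submod[OF XY YZ] unfolding dMag_def by linarith
qed

lemma dMag_triangle_if_Mag_submodular:
  assumes t: "t > 0" and D: "D \<ge> 1"
    and submod: "\<And>A B. pts D A \<Longrightarrow> pts D B \<Longrightarrow> Mag t (A \<union> B) + Mag t (A \<inter> B) \<le> Mag t A + Mag t B"
    and XYZ: "pts D X" "pts D Y" "pts D Z"
  shows "dMag t X Z \<le> dMag t X Y + dMag t Y Z"
proof (cases "D = 1")
  case True
  then show ?thesis
    using dMag_triangle_1d[OF t] submod XYZ by blast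
next
  case False
  then obtain A B where "pts D A" "pts D B" "Mag t A + Mag t B < Mag t (A \<union> B) + Mag t (A \<inter> B)"
    using Mag_not_submodular[OF t, of D] D by auto
  then show ?thesis
    using submod by (metis leD)
qed

lemma dMag_not_triangle:
  assumes t: "t > 0" and D: "D \<ge> 2"
  shows "\<exists>X Y Z. pts D X \<and> pts D Y \<and> pts D Z \<and> dMag t X Y + dMag t Y Z < dMag t X Z"
proof -
  obtain A B where A: "pts D A" and B: "pts D B"
    and "Mag t A + Mag t B < Mag t (A \<union> B) + Mag t (A \<inter> B)"
    using Mag_not_submodular[OF t D] by auto
  then have "dMag t A (A \<inter> B) + dMag t (A \<inter> B) B < dMag t A B"
    using dMag_triangle_defect[of t A B] by (simp add: algebra_simps)
  moreover have "pts D (A \<inter> B)"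
    using A by (auto simp: pts_def)
  ultimately show ?thesis
    using A B by (intro exI[of _ A] exI[of _ "A \<inter> B"] exI[of _ B]) simp
qed

theorem lemmaB6:
  shows "(\<forall>t::real. \<forall>D::nat. t > 0 \<longrightarrow> D \<ge> 1 \<longrightarrow>
            ((\<forall>X Y Z. pts D X \<longrightarrow> pts D Y \<longrightarrow> pts D Z \<longrightarrow>
                 dMag t X Y + dMag t Y Z \<ge> dMag t X Z)
             \<longleftrightarrow>
             (\<forall>A B. pts D A \<longrightarrow> pts D B \<longrightarrow>
                 Mag t A + Mag t B \<ge> Mag t (A \<union> B) + Mag t (A \<inter> B))))
       \<and> (\<exists>D::nat. \<exists>t::real. \<exists>X Y Z. D \<ge> 1 \<and> t > 0 \<and> pts D X \<and> pts D Y \<and> pts D Z \<and>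
            dMag t X Y + dMag t Y Z < dMag t X Z)"
proof (intro conjI allI impI iffI)
  fix t :: real and D :: nat and A B
  assume "\<forall>X Y Z. pts D X \<longrightarrow> pts D Y \<longrightarrow> pts D Z \<longrightarrow> dMag t X Y + dMag t Y Z \<ge> dMag t X Z"
    and "pts D A" "pts D B"
  then show "Mag t A + Mag t B \<ge> Mag t (A \<union> B) + Mag t (A \<inter> B)"
    by (intro Mag_submodular_if_dMag_triangle) auto
next
  fix t :: real and D :: nat and X Y Z
  assume "t > 0" "D \<ge> 1"
    and "\<forall>A B. pts D A \<longrightarrow> pts D B \<longrightarrow> Mag t A + Mag t B \<ge> Mag t (A \<union> B) + Mag t (A \<inter> B)"
    and "pts D X" "pts D Y" "pts D Z"
  then show "dMag t X Y + dMag t Y Z \<ge> dMag t X Z"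
    by (intro dMag_triangle_if_Mag_submodular) auto
next
  show "\<exists>D t X Y Z. D \<ge> 1 \<and> t > 0 \<and> pts D X \<and> pts D Y \<and> pts D Z \<and>
      dMag t X Y + dMag t Y Z < dMag t X Z"
    using dMag_not_triangle[of 1 2] by (intro exI[of _ "2::nat"] exI[of _ "1::real"]) simp
qed

end
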